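(* Let $\alpha \ge 1$ and let $\mathcal{F}$ be a $k$-uniform hypergraph on $[n]$. Let $\mathcal{P}_{\mathcal{F}}$ be the partition of $[n]$ into the equivalence classes of the relation in which $i \sim j$ if and only if $i=j$ or the transposition $(ij)$ is an automorphism of $\mathcal{F}$. Then there is $\vec{w}\in\mathbb{R}^n$ with $\|\vec{w}\|_\alpha = 1$ and $w_t \ge 0$ for all $1\le t\le n$ such that $\tau_{\mathcal{F}}(\vec{w},\dots,\vec{w}) = \lambda_\alpha(\mathcal{F})$ and $\vec{w}$ is constant on each part of $\mathcal{P}_{\mathcal{F}}$.
   Context: For a $k$-uniform hypergraph $\mathcal{F}$ on $[n]$ and $x\in\mathbb{R}^n$, $\tau_{\mathcal{F}}(x,\dots,x) = k!\sum_{\{i_1,\dots,i_k\}\in E(\mathcal{F})}x_{i_1}\cdots x_{i_k}$, and $\lambda_\alpha(\mathcal{F}) = \max\{\tau_{\mathcal{F}}(x,\dots,x) : \|x\|_\alpha = 1\}$ where $\|x\|_\alpha = (\sum_i|x_i|^\alpha)^{1/\alpha}$. *)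

theory Defs
  imports "HOL-Analysis.Analysis" "HOL-Combinatorics.Transposition"
begin

definition k_uniform :: "nat \<Rightarrow> 'v set set \<Rightarrow> bool" where
  "k_uniform k F \<longleftrightarrow> (\<forall>e\<in>F. card e = k)"

definition tau :: "nat \<Rightarrow> 'v set set \<Rightarrow> ('v \<Rightarrow> real) \<Rightarrow> real" where
  "tau k F x = fact k * (\<Sum>e\<in>F. \<Prod>i\<in>e. x i)"

definition anorm :: "real \<Rightarrow> ('v::finite \<Rightarrow> real) \<Rightarrow> real" where
  "anorm \<alpha> x = (\<Sum>i\<in>UNIV. \<bar>x i\<bar> powr \<alpha>) powr (1 / \<alpha>)"

(* lambda_alpha(F) = max { tau_F(x) : ||x||_alpha = 1 } (written as Sup; the maximum is attained) *)
definition lambda_alpha :: "real \<Rightarrow> nat \<Rightarrow> ('v::finite) set set \<Rightarrow> real" where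
  "lambda_alpha \<alpha> k F = Sup {tau k F x | x. anorm \<alpha> x = 1}"

definition transp_aut :: "'v set set \<Rightarrow> 'v \<Rightarrow> 'v \<Rightarrow> bool" where
  "transp_aut F i j \<longleftrightarrow> (\<lambda>e. Transposition.transpose i j ` e) ` F = F"

definition sim_rel :: "'v set set \<Rightarrow> 'v \<Rightarrow> 'v \<Rightarrow> bool" where
  "sim_rel F i j \<longleftrightarrow> i = j \<or> transp_aut F i j"

end

theory Submission
  imports Defs
begin

text \<open>By compactness \<open>\<tau>\<close> attains its maximum on the nonnegative part of the unit
\<open>\<alpha>\<close>-sphere, and this maximum is \<open>\<lambda>\<^sub>\<alpha>\<close> because \<open>\<tau>(x) \<le> \<tau>(|x|)\<close>. Among
the maximisers choose one, \<open>w\<close>, maximising the strictly concave function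
\<open>\<Sum>\<^sub>t \<surd>w\<^sub>t\<close>. If the transposition \<open>(i j)\<close> is an automorphism but \<open>w\<^sub>i \<noteq> w\<^sub>j\<close>,
replace both coordinates by their \<open>\<alpha>\<close>-power mean \<open>m\<close>. This keeps the norm, and
since \<open>m\<close> dominates both the arithmetic and the geometric mean of \<open>w\<^sub>i, w\<^sub>j\<close>,
each edge together with its image under \<open>(i j)\<close> contributes at least as much as
before, so the new vector is again a maximiser; but it has a strictly larger
\<open>\<Sum>\<^sub>t \<surd>w\<^sub>t\<close>.\<close>

definition pmean :: "real \<Rightarrow> real \<Rightarrow> real \<Rightarrow> real" where
  "pmean \<alpha> a b = ((a powr \<alpha> + b powr \<alpha>) / 2) powr (1 / \<alpha>)"

lemma pmean_nonneg: "0 \<le> pmean \<alpha> a b"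
  by (simp add: pmean_def)

lemma pmean_powr:
  assumes "\<alpha> \<noteq> 0"
  shows "pmean \<alpha> a b powr \<alpha> = (a powr \<alpha> + b powr \<alpha>) / 2"
  using assms by (simp add: pmean_def powr_powr)

lemma midpoint_powr_le:
  fixes a b \<alpha> :: real
  assumes "0 \<le> a" "0 \<le> b" "1 \<le> \<alpha>"
  shows "((a + b) / 2) powr \<alpha> \<le> (a powr \<alpha> + b powr \<alpha>) / 2"
proof (cases "0 < a \<and> 0 < b")
  case True
  then show ?thesis
    using convex_onD[OF powr_convex[OF assms(3)], of "1/2" a b] by (simp add: field_simps)
next
  case False
  have half_powr: "(c / 2) powr \<alpha> \<le> c powr \<alpha> / 2" if "0 \<le> c" for c :: real
  proof -
    have "2 powr 1 \<le> 2 powr \<alpha>" using assms(3) by (intro powr_mono) auto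
    then have "c powr \<alpha> / 2 powr \<alpha> \<le> c powr \<alpha> / 2" by (intro divide_left_mono) auto
    then show ?thesis using that by (simp add: powr_divide)
  qed
  show ?thesis using False assms half_powr[of a] half_powr[of b] by (auto simp: not_less)
qed

lemma midpoint_le_pmean:
  assumes "0 \<le> a" "0 \<le> b" "1 \<le> \<alpha>"
  shows "(a + b) / 2 \<le> pmean \<alpha> a b"
proof -
  have "(a + b) / 2 = (((a + b) / 2) powr \<alpha>) powr (1 / \<alpha>)"
    using assms by (simp add: powr_powr)
  also have "\<dots> \<le> pmean \<alpha> a b"
    unfolding pmean_def using assms midpoint_powr_le by (intro powr_mono2) auto
  finally show ?thesis .
qed

lemma mult_le_pmean_square:
  assumes "0 \<le> a" "0 \<le> b" "1 \<le> \<alpha>"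
  shows "a * b \<le> pmean \<alpha> a b * pmean \<alpha> a b"
proof -
  have "a * b \<le> ((a + b) / 2) * ((a + b) / 2)"
    using sum_squares_ge_zero[of "a - b" 0] by (simp add: algebra_simps power2_eq_square)
  also have "\<dots> \<le> pmean \<alpha> a b * pmean \<alpha> a b"
    using midpoint_le_pmean[OF assms] assms by (intro mult_mono) auto
  finally show ?thesis .
qed

lemma sqrt_add_less_sqrt_midpoint:
  fixes a b m :: real
  assumes "0 \<le> a" "0 \<le> b" "a \<noteq> b" "a + b \<le> 2 * m"
  shows "sqrt a + sqrt b < 2 * sqrt m"
proof -
  have "0 < (sqrt a - sqrt b)\<^sup>2" using assms by simp
  then have "((sqrt a + sqrt b) / 2)\<^sup>2 < (a + b) / 2"
    using assms by (simp add: power2_eq_square algebra_simps)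
  then have "(sqrt a + sqrt b) / 2 < sqrt ((a + b) / 2)" by (rule real_less_rsqrt)
  also have "\<dots> \<le> sqrt m" using assms by simp
  finally show ?thesis by simp
qed

lemma sum_UNIV_split_pair:
  fixes f :: "'v::finite \<Rightarrow> 'a::comm_monoid_add"
  assumes "i \<noteq> j"
  shows "sum f UNIV = f i + f j + sum f (UNIV - {i, j})"
proof -
  have "sum f UNIV = sum f {i, j} + sum f (UNIV - {i, j})"
    by (metis add.commute finite subset_UNIV sum.subset_diff)
  then show ?thesis using assms by simp
qed

lemma prod_split_pair:
  fixes f :: "'v \<Rightarrow> real"
  assumes "finite e" "i \<noteq> j"
  shows "prod f e = (if i \<in> e then f i else 1) * (if j \<in> e then f j else 1) * prod f (e - {i, j})"
proof -
  have "prod f e = prod f (e \<inter> {i, j}) * prod f (e - {i, j})"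
    using assms(1) by (metis Diff_disjoint Int_Diff_disjoint Int_Diff_Un finite_Diff finite_Int prod.union_disjoint)
  moreover have "prod f (e \<inter> {i, j}) = (if i \<in> e then f i else 1) * (if j \<in> e then f j else 1)"
    using assms by (cases "i \<in> e"; cases "j \<in> e") (auto simp: Int_insert_right)
  ultimately show ?thesis by simp
qed

lemma prod_add_prod_transpose_le_balanced:
  fixes x :: "'v \<Rightarrow> real"
  assumes "finite e" "i \<noteq> j" "\<forall>t. 0 \<le> x t" "0 \<le> m"
    and "x i + x j \<le> 2 * m" "x i * x j \<le> m * m"
  shows "(\<Prod>t\<in>e. x t) + (\<Prod>t\<in>e. x (Transposition.transpose i j t)) \<le> 2 * (\<Prod>t\<in>e. (x(i := m, j := m)) t)"
proof -
  define pair where "pair a b = (if i \<in> e then a else 1) * (if j \<in> e then b else 1)" for a b :: real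
  define R where "R = (\<Prod>t\<in>e - {i, j}. x t)"
  have "(\<Prod>t\<in>e - {i, j}. x (Transposition.transpose i j t)) = R" "(\<Prod>t\<in>e - {i, j}. (x(i := m, j := m)) t) = R"
    unfolding R_def by (auto intro: prod.cong)
  then have "(\<Prod>t\<in>e. x t) + (\<Prod>t\<in>e. x (Transposition.transpose i j t)) = (pair (x i) (x j) + pair (x j) (x i)) * R"
    and "(\<Prod>t\<in>e. (x(i := m, j := m)) t) = pair m m * R"
    using assms(2) unfolding prod_split_pair[OF assms(1,2)] pair_def R_def by (simp_all add: distrib_right)
  moreover have "pair (x i) (x j) + pair (x j) (x i) \<le> 2 * pair m m"
    unfolding pair_def using assms by (cases "i \<in> e"; cases "j \<in> e") auto
  moreover have "0 \<le> R" unfolding R_def using assms(3) by (simp add: prod_nonneg)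
  ultimately show ?thesis by (metis mult.assoc mult_right_mono)
qed

lemma sum_prod_transpose_eq:
  fixes x :: "'v \<Rightarrow> real"
  assumes "transp_aut F i j"
  shows "(\<Sum>e\<in>F. \<Prod>t\<in>e. x (Transposition.transpose i j t)) = (\<Sum>e\<in>F. \<Prod>t\<in>e. x t)"
proof -
  have inj: "inj_on (\<lambda>e. Transposition.transpose i j ` e) F"
    by (rule inj_onI) (simp add: inj_image_eq_iff inj_transpose)
  have "(\<Sum>e\<in>F. \<Prod>t\<in>e. x (Transposition.transpose i j t)) = (\<Sum>e\<in>F. \<Prod>t\<in>Transposition.transpose i j ` e. x t)"
    by (rule sum.cong) (auto simp: prod.reindex[OF inj_on_transpose])
  also have "\<dots> = (\<Sum>e\<in>(\<lambda>e. Transposition.transpose i j ` e) ` F. \<Prod>t\<in>e. x t)"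
    by (simp add: sum.reindex[OF inj])
  also have "\<dots> = (\<Sum>e\<in>F. \<Prod>t\<in>e. x t)"
    using assms unfolding transp_aut_def by simp
  finally show ?thesis .
qed

lemma tau_le_tau_balanced:
  fixes F :: "('v::finite) set set" and x :: "'v \<Rightarrow> real"
  assumes "transp_aut F i j" "i \<noteq> j" "\<forall>t. 0 \<le> x t" "0 \<le> m"
    and "x i + x j \<le> 2 * m" "x i * x j \<le> m * m"
  shows "tau k F x \<le> tau k F (x(i := m, j := m))"
proof -
  have "2 * (\<Sum>e\<in>F. \<Prod>t\<in>e. x t) = (\<Sum>e\<in>F. (\<Prod>t\<in>e. x t) + (\<Prod>t\<in>e. x (Transposition.transpose i j t)))"
    by (simp add: sum.distrib sum_prod_transpose_eq[OF assms(1)])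
  also have "\<dots> \<le> (\<Sum>e\<in>F. 2 * (\<Prod>t\<in>e. (x(i := m, j := m)) t))"
    using assms(2-) by (intro sum_mono prod_add_prod_transpose_le_balanced) auto
  finally have "(\<Sum>e\<in>F. \<Prod>t\<in>e. x t) \<le> (\<Sum>e\<in>F. \<Prod>t\<in>e. (x(i := m, j := m)) t)"
    unfolding sum_distrib_left[symmetric] by simp
  then show ?thesis unfolding tau_def by (simp add: mult_left_mono)
qed

lemma anorm_balanced_pmean:
  fixes x :: "'v::finite \<Rightarrow> real"
  assumes "\<alpha> \<noteq> 0" "i \<noteq> j" "0 \<le> x i" "0 \<le> x j"
  shows "anorm \<alpha> (x(i := pmean \<alpha> (x i) (x j), j := pmean \<alpha> (x i) (x j))) = anorm \<alpha> x"
proof -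
  let ?x' = "x(i := pmean \<alpha> (x i) (x j), j := pmean \<alpha> (x i) (x j))"
  have "(\<Sum>t\<in>UNIV - {i, j}. \<bar>?x' t\<bar> powr \<alpha>) = (\<Sum>t\<in>UNIV - {i, j}. \<bar>x t\<bar> powr \<alpha>)"
    by (rule sum.cong) auto
  then have "(\<Sum>t\<in>UNIV. \<bar>?x' t\<bar> powr \<alpha>) = (\<Sum>t\<in>UNIV. \<bar>x t\<bar> powr \<alpha>)"
    using assms by (simp add: sum_UNIV_split_pair[OF assms(2)] pmean_nonneg pmean_powr)
  then show ?thesis unfolding anorm_def by simp
qed

lemma sum_sqrt_less_balanced:
  fixes x :: "'v::finite \<Rightarrow> real"
  assumes "i \<noteq> j" "0 \<le> x i" "0 \<le> x j" "x i \<noteq> x j" "x i + x j \<le> 2 * m"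
  shows "(\<Sum>t\<in>UNIV. sqrt (x t)) < (\<Sum>t\<in>UNIV. sqrt ((x(i := m, j := m)) t))"
proof -
  have "(\<Sum>t\<in>UNIV - {i, j}. sqrt ((x(i := m, j := m)) t)) = (\<Sum>t\<in>UNIV - {i, j}. sqrt (x t))"
    by (rule sum.cong) auto
  then show ?thesis
    using sqrt_add_less_sqrt_midpoint[OF assms(2-)] assms(1)
    by (simp add: sum_UNIV_split_pair[OF assms(1)])
qed

lemma continuous_on_coordinate [continuous_intros]:
  "continuous_on S (\<lambda>x::'v \<Rightarrow> real. x t)"
  by (rule continuous_on_subset[OF continuous_on_product_coordinates]) simp

lemma continuous_on_tau [continuous_intros]: "continuous_on S (tau k F)"
  unfolding tau_def by (intro continuous_intros)

lemma anorm_eq_1_iff: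
  assumes "\<alpha> \<noteq> 0"
  shows "anorm \<alpha> x = 1 \<longleftrightarrow> (\<Sum>t\<in>UNIV. \<bar>x t\<bar> powr \<alpha>) = 1"
proof -
  have "s powr (1 / \<alpha>) = 1 \<longleftrightarrow> s = 1" if "0 \<le> s" for s :: real
    using that assms by (cases "s = 0 \<or> s = 1") auto
  then show ?thesis unfolding anorm_def by (simp add: sum_nonneg)
qed

definition nonneg_unit_sphere :: "real \<Rightarrow> ('v::finite \<Rightarrow> real) set" where
  "nonneg_unit_sphere \<alpha> = {x. (\<forall>t. 0 \<le> x t) \<and> anorm \<alpha> x = 1}"

lemma compact_nonneg_unit_sphere:
  assumes "0 < \<alpha>"
  shows "compact (nonneg_unit_sphere \<alpha> :: ('v::finite \<Rightarrow> real) set)"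
proof -
  let ?cube = "Pi UNIV (\<lambda>_. {0..1}) :: ('v \<Rightarrow> real) set"
  have "compactin (product_topology (\<lambda>_. euclidean) UNIV) (PiE UNIV (\<lambda>_::'v. {0..1::real}))"
    by (simp add: compactin_PiE)
  then have "compact ?cube"
    unfolding euclidean_product_topology PiE_UNIV_domain by simp
  moreover have "closed (nonneg_unit_sphere \<alpha> :: ('v \<Rightarrow> real) set)"
    unfolding nonneg_unit_sphere_def anorm_eq_1_iff[OF less_imp_neq[OF assms, symmetric]]
    using assms
    by (intro closed_Collect_conj closed_Collect_all closed_Collect_le closed_Collect_eq
          continuous_intros continuous_on_powr') auto
  moreover have "x t \<le> 1" if "x \<in> nonneg_unit_sphere \<alpha>" for x :: "'v \<Rightarrow> real" and t
  proof (rule ccontr)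
    assume "\<not> x t \<le> 1"
    then have "1 < \<bar>x t\<bar> powr \<alpha>" using assms powr_less_mono2[of \<alpha> 1 "\<bar>x t\<bar>"] by simp
    also have "\<dots> \<le> (\<Sum>t\<in>UNIV. \<bar>x t\<bar> powr \<alpha>)" by (rule member_le_sum) auto
    finally show False
      using that assms unfolding nonneg_unit_sphere_def anorm_eq_1_iff[OF less_imp_neq[OF assms, symmetric]] by simp
  qed
  then have "nonneg_unit_sphere \<alpha> = ?cube \<inter> nonneg_unit_sphere \<alpha>"
    unfolding nonneg_unit_sphere_def by auto
  ultimately show ?thesis by (metis compact_Int_closed)
qed

lemma tau_le_tau_abs: "tau k F x \<le> tau k F (\<lambda>t. \<bar>x t\<bar>)"
  unfolding tau_def by (intro mult_left_mono sum_mono) (auto simp flip: abs_prod)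

definition tau_maximizers :: "real \<Rightarrow> nat \<Rightarrow> ('v::finite) set set \<Rightarrow> ('v \<Rightarrow> real) set" where
  "tau_maximizers \<alpha> k F =
     {w \<in> nonneg_unit_sphere \<alpha>. \<forall>x. anorm \<alpha> x = 1 \<longrightarrow> tau k F x \<le> tau k F w}"

lemma tau_maximizers_nonempty:
  fixes F :: "('v::finite) set set"
  assumes "0 < \<alpha>"
  shows "tau_maximizers \<alpha> k F \<noteq> {}"
proof -
  obtain v :: 'v where True by simp
  have "(\<Sum>t\<in>UNIV. \<bar>if t = v then 1 else 0\<bar> powr \<alpha>) = (\<Sum>t\<in>UNIV. if t = v then 1 else (0::real))"
    by (rule sum.cong) auto
  then have "(\<lambda>t. if t = v then 1 else 0) \<in> nonneg_unit_sphere \<alpha>"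
    by (simp add: nonneg_unit_sphere_def anorm_def)
  then obtain w where w: "w \<in> nonneg_unit_sphere \<alpha>" "\<And>y. y \<in> nonneg_unit_sphere \<alpha> \<Longrightarrow> tau k F y \<le> tau k F w"
    using continuous_attains_sup[OF compact_nonneg_unit_sphere[OF assms] _ continuous_on_tau] by blast
  have "tau k F x \<le> tau k F w" if "anorm \<alpha> x = 1" for x
  proof -
    have "(\<lambda>t. \<bar>x t\<bar>) \<in> nonneg_unit_sphere \<alpha>"
      using that by (simp add: nonneg_unit_sphere_def anorm_def)
    then show ?thesis using tau_le_tau_abs w(2) order.trans by blast
  qed
  with w(1) show ?thesis unfolding tau_maximizers_def by blast
qed

lemma compact_tau_maximizers:
  fixes F :: "('v::finite) set set"
  assumes "0 < \<alpha>"
  shows "compact (tau_maximizers \<alpha> k F)"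
proof -
  have "closed {w :: 'v \<Rightarrow> real. \<forall>x. anorm \<alpha> x = 1 \<longrightarrow> tau k F x \<le> tau k F w}"
    by (intro closed_Collect_all closed_Collect_imp closed_Collect_le continuous_intros) auto
  then show ?thesis
    unfolding tau_maximizers_def Collect_conj_eq[of "\<lambda>w. w \<in> _", simplified]
    using compact_nonneg_unit_sphere[OF assms] by blast
qed

lemma lambda_alpha_eq_tau_maximizer:
  assumes "w \<in> tau_maximizers \<alpha> k F"
  shows "lambda_alpha \<alpha> k F = tau k F w"
  unfolding lambda_alpha_def
  using assms by (intro cSup_eq_maximum) (auto simp: tau_maximizers_def nonneg_unit_sphere_def)

lemma sqrt_sum_maximal_maximizer_symmetric:
  fixes F :: "('v::finite) set set"
  assumes "1 \<le> \<alpha>" "transp_aut F i j"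
    and w: "w \<in> tau_maximizers \<alpha> k F"
    and w_max: "\<forall>y \<in> tau_maximizers \<alpha> k F. (\<Sum>t\<in>UNIV. sqrt (y t)) \<le> (\<Sum>t\<in>UNIV. sqrt (w t))"
  shows "w i = w j"
proof (rule ccontr)
  assume ne: "w i \<noteq> w j"
  then have "i \<noteq> j" by auto
  have w_nonneg: "\<forall>t. 0 \<le> w t" and w_norm: "anorm \<alpha> w = 1"
    using w by (auto simp: tau_maximizers_def nonneg_unit_sphere_def)
  define m where "m = pmean \<alpha> (w i) (w j)"
  have m: "0 \<le> m" "w i + w j \<le> 2 * m" "w i * w j \<le> m * m"
    using midpoint_le_pmean[of "w i" "w j" \<alpha>] mult_le_pmean_square[of "w i" "w j" \<alpha>]
      w_nonneg assms(1) unfolding m_def by (auto simp: pmean_nonneg)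
  define w' where "w' = w(i := m, j := m)"
  have "anorm \<alpha> w' = 1"
    using anorm_balanced_pmean[of \<alpha> i j w] \<open>i \<noteq> j\<close> w_nonneg w_norm assms(1)
    unfolding w'_def m_def by simp
  moreover have "tau k F w \<le> tau k F w'"
    unfolding w'_def using tau_le_tau_balanced[OF assms(2) \<open>i \<noteq> j\<close> w_nonneg m] .
  moreover have "\<forall>t. 0 \<le> w' t" using w_nonneg m(1) unfolding w'_def by simp
  ultimately have "w' \<in> tau_maximizers \<alpha> k F"
    using w unfolding tau_maximizers_def nonneg_unit_sphere_def by (blast intro: order.trans)
  moreover have "(\<Sum>t\<in>UNIV. sqrt (w t)) < (\<Sum>t\<in>UNIV. sqrt (w' t))"
    unfolding w'_def using sum_sqrt_less_balanced[OF \<open>i \<noteq> j\<close> _ _ ne m(2)] w_nonneg by simp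
  ultimately show False using w_max by fastforce
qed

theorem corollary12:
  fixes F :: "('v::finite) set set" and k :: nat and \<alpha> :: real
  assumes "\<alpha> \<ge> 1" and "k_uniform k F"
  shows "\<exists>w :: 'v \<Rightarrow> real. anorm \<alpha> w = 1 \<and> (\<forall>t. w t \<ge> 0)
           \<and> tau k F w = lambda_alpha \<alpha> k F
           \<and> (\<forall>i j. sim_rel F i j \<longrightarrow> w i = w j)"
proof -
  have "0 < \<alpha>" using assms(1) by simp
  have "continuous_on (tau_maximizers \<alpha> k F) (\<lambda>y. \<Sum>t\<in>UNIV. sqrt (y t))"
    by (intro continuous_intros)
  then obtain w where w: "w \<in> tau_maximizers \<alpha> k F"
    and w_max: "\<forall>y \<in> tau_maximizers \<alpha> k F. (\<Sum>t\<in>UNIV. sqrt (y t)) \<le> (\<Sum>t\<in>UNIV. sqrt (w t))"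
    using continuous_attains_sup[OF compact_tau_maximizers tau_maximizers_nonempty] \<open>0 < \<alpha>\<close>
    by blast
  have "w i = w j" if "sim_rel F i j" for i j
    using that sqrt_sum_maximal_maximizer_symmetric[OF assms(1) _ w w_max]
    unfolding sim_rel_def by auto
  with w show ?thesis
    by (auto simp: lambda_alpha_eq_tau_maximizer tau_maximizers_def nonneg_unit_sphere_def)
qed

end
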